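(* Under Assumptions A1–A4, with $(\beta_t)$ positive and $\beta_t\to\infty$, the BOKE+ iterates $\bm{X}_t$ satisfy: (i) for a fixed bandwidth $\ell_t\equiv\ell$, $\inf_t h_{\mathcal{X},\bm{X}_t}\le R_\Psi\ell$ almost surely; (ii) there exists a bandwidth sequence $\ell_t\to0$ such that $\inf_t h_{\mathcal{X},\bm{X}_t}=0$ almost surely.
   Context: Standing setup. A1: $\mathcal{X}\subset\mathbb{R}^d$ compact, convex, nonempty interior. A2: $f$ continuous on $\mathcal{X}$. A3: kernel $k(\bm{x},\bm{x}')=\Psi((\bm{x}-\bm{x}')/\ell)$, $\Psi\ge0$ with support in $B(\bm{0},R_\Psi)$, continuous at $\bm{0}$, $\Psi(\bm{0})>0$, $\sup\Psi\le M_\Psi$. A4: independent zero-mean sub-Gaussian noises with parameter $\varsigma$. $W_t(\bm{x})=\sum_ik(\bm{x},\bm{x}_i)$; $m_t$ is kernel regression $\sum_ik(\bm{x},\bm{x}_i)y_i/W_t(\bm{x})$, extended by the nearest-neighbor average where $W_t=0$; $\hat\sigma_t=W_t^{-1/2}$ (with $c/0=\infty$). BOKE+ with parameter $p\in(0,1]$: at each iteration $t\ge T_0$ draw independently $q\sim\mathrm{Bernoulli}(p)$; if $q=1$ set $\bm{x}_{t+1}\in\arg\max_{\mathcal{X}}(m_t+\beta_t\hat\sigma_t)$, otherwise $\bm{x}_{t+1}\in\arg\max_{\mathcal{X}}m_t$; observe $y_{t+1}=f(\bm{x}_{t+1})+\varepsilon_{t+1}$. Fill distance $h_{\mathcal{X},\bm{X}_t}=\sup_{\bm{x}\in\mathcal{X}}\min_{i\le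 t}\|\bm{x}-\bm{x}_i\|$. *)

theory Defs
  imports "HOL-Probability.Probability"
begin

definition Wsum :: "('a::euclidean_space \<Rightarrow> real) \<Rightarrow> real \<Rightarrow> (nat \<Rightarrow> 'a) \<Rightarrow> nat \<Rightarrow> 'a \<Rightarrow> real" where
  "Wsum Psi l xs t x = (\<Sum>i\<in>{1..t}. Psi ((1 / l) *\<^sub>R (x - xs i)))"

definition nn_avg :: "(nat \<Rightarrow> 'a::euclidean_space) \<Rightarrow> (nat \<Rightarrow> real) \<Rightarrow> nat \<Rightarrow> 'a \<Rightarrow> real" where
  "nn_avg xs ys t x =
     (let d = Min ((\<lambda>i. dist x (xs i)) ` {1..t});
          N = {i\<in>{1..t}. dist x (xs i) = d}
      in (\<Sum>i\<in>N. ys i) / real (card N))"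

definition kreg :: "('a::euclidean_space \<Rightarrow> real) \<Rightarrow> real \<Rightarrow> (nat \<Rightarrow> 'a) \<Rightarrow> (nat \<Rightarrow> real) \<Rightarrow> nat \<Rightarrow> 'a \<Rightarrow> real" where
  "kreg Psi l xs ys t x =
     (if Wsum Psi l xs t x = 0 then nn_avg xs ys t x
      else (\<Sum>i\<in>{1..t}. Psi ((1 / l) *\<^sub>R (x - xs i)) * ys i) / Wsum Psi l xs t x)"

definition sigma_hat :: "('a::euclidean_space \<Rightarrow> real) \<Rightarrow> real \<Rightarrow> (nat \<Rightarrow> 'a) \<Rightarrow> nat \<Rightarrow> 'a \<Rightarrow> ereal" where
  "sigma_hat Psi l xs t x =
     (if Wsum Psi l xs t x = 0 then \<infinity> else ereal (1 / sqrt (Wsum Psi l xs t x)))"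

definition ucb :: "('a::euclidean_space \<Rightarrow> real) \<Rightarrow> real \<Rightarrow> real \<Rightarrow> (nat \<Rightarrow> 'a) \<Rightarrow> (nat \<Rightarrow> real) \<Rightarrow> nat \<Rightarrow> 'a \<Rightarrow> ereal" where
  "ucb Psi l b xs ys t x = ereal (kreg Psi l xs ys t x) + ereal b * sigma_hat Psi l xs t x"

definition is_argmax_on :: "'a set \<Rightarrow> ('a \<Rightarrow> 'b::linorder) \<Rightarrow> 'a \<Rightarrow> bool" where
  "is_argmax_on S g z \<longleftrightarrow> z \<in> S \<and> (\<forall>w\<in>S. g w \<le> g z)"

definition fill_distance :: "'a::euclidean_space set \<Rightarrow> (nat \<Rightarrow> 'a) \<Rightarrow> nat \<Rightarrow> real" where
  "fill_distance X xs t = (SUP x\<in>X. Min ((\<lambda>i. dist x (xs i)) ` {1..t}))"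

definition zero_mean_subgaussian :: "'w measure \<Rightarrow> ('w \<Rightarrow> real) \<Rightarrow> real \<Rightarrow> bool" where
  "zero_mean_subgaussian M e s \<longleftrightarrow>
     integrable M e \<and> integral\<^sup>L M e = 0 \<and>
     (\<forall>lam::real. integrable M (\<lambda>w. exp (lam * e w)) \<and>
        integral\<^sup>L M (\<lambda>w. exp (lam * e w)) \<le> exp (lam\<^sup>2 * s\<^sup>2 / 2))"

text \<open>A run of BOKE+ on the probability space M: design points x_1, x_2, ... (x i w),
  Bernoulli coins q_t (t >= T0), noises eps_i (i >= 1), observations
  y_i = f(x_i) + eps_i, initial design x_1..x_T0 in X, bandwidth sequence l.\<close>
definition boke_plus_run ::
  "'w measure \<Rightarrow> 'a::euclidean_space set \<Rightarrow> ('a \<Rightarrow> real) \<Rightarrow> ('a \<Rightarrow> real) \<Rightarrow> real \<Rightarrow> real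
   \<Rightarrow> (nat \<Rightarrow> real) \<Rightarrow> (nat \<Rightarrow> real) \<Rightarrow> nat
   \<Rightarrow> (nat \<Rightarrow> 'w \<Rightarrow> bool) \<Rightarrow> (nat \<Rightarrow> 'w \<Rightarrow> real) \<Rightarrow> (nat \<Rightarrow> 'w \<Rightarrow> 'a) \<Rightarrow> bool" where
  "boke_plus_run M X f Psi vs p beta l T0 q eps x \<longleftrightarrow>
     prob_space M \<and>
     prob_space.indep_vars M (\<lambda>_. borel)
        (\<lambda>j. case j of Inl t \<Rightarrow> (\<lambda>w. of_bool (q t w)) | Inr i \<Rightarrow> eps i)
        (Inl ` {T0..} \<union> Inr ` {1..}) \<and>
     (\<forall>t\<ge>T0. measure M {w\<in>space M. q t w} = p) \<and>
     (\<forall>i\<ge>1. zero_mean_subgaussian M (eps i) vs) \<and>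
     (\<forall>w\<in>space M. \<forall>i\<ge>1. x i w \<in> X) \<and>
     (\<forall>w\<in>space M. \<forall>t\<ge>T0.
        (let xs = (\<lambda>i. x i w); ys = (\<lambda>i. f (x i w) + eps i w) in
         if q t w then is_argmax_on X (ucb Psi (l t) (beta t) xs ys t) (x (Suc t) w)
         else is_argmax_on X (kreg Psi (l t) xs ys t) (x (Suc t) w)))"

end

theory Submission
  imports Defs
begin

text \<open>
  If the fill distance at time t exceeds R_Psi * l, some point of X lies outside the support of
  every kernel bump, so sigma_hat = infinity there. Hence every UCB maximiser also has W_t = 0:
  it lies at distance at least d * l from all earlier design points, where Psi > 0 on the ball of
  radius d. A compact set holds only finitely many (its packing number) d * l-separated points,
  so among more UCB steps than that one must occur with fill distance at most R_Psi * l. The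
  UCB steps are independent coin flips with success probability p > 0, so almost surely such
  runs of UCB steps occur. For (ii) the bandwidth is lowered from 1/(k+1) to 1/(k+2) only after
  a block so long that, with probability at least 1 - 1/(k+1), it contains more UCB steps than
  the packing number at scale d/(k+1); almost surely infinitely many blocks succeed.
\<close>

definition separated :: "real \<Rightarrow> 'a::metric_space set \<Rightarrow> bool" where
  "separated e S \<longleftrightarrow> (\<forall>a\<in>S. \<forall>b\<in>S. a \<noteq> b \<longrightarrow> e \<le> dist a b)"

lemma bdd_above_card_separated:
  fixes X :: "'a::metric_space set"
  assumes "compact X" "e > 0"
  shows "bdd_above {card S |S. S \<subseteq> X \<and> finite S \<and> separated e S}"
proof -
  obtain C where C: "finite C" "X \<subseteq> (\<Union>c\<in>C. ball c (e/2))"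
    using seq_compact_imp_totally_bounded[OF compact_imp_seq_compact[OF assms(1)], rule_format, of "e/2"]
      assms(2) by auto
  have "card S \<le> card C" if S: "S \<subseteq> X" "finite S" "separated e S" for S
  proof -
    have "\<forall>a\<in>S. \<exists>c. c \<in> C \<and> dist c a < e/2"
      using C(2) S(1) by fastforce
    then obtain g where g: "\<And>a. a \<in> S \<Longrightarrow> g a \<in> C \<and> dist (g a) a < e/2"
      using bchoice by metis
    have "inj_on g S"
    proof (rule inj_onI, rule ccontr)
      fix a b assume ab: "a \<in> S" "b \<in> S" "g a = g b" "a \<noteq> b"
      have "dist a b \<le> dist (g a) a + dist (g b) b"
        using ab(3) by (metis dist_commute dist_triangle)
      also have "\<dots> < e" using g[OF ab(1)] g[OF ab(2)] by simp
      finally show False using S(3) ab unfolding separated_def by force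
    qed
    then show ?thesis using g C(1) by (intro card_inj_on_le) auto
  qed
  then show ?thesis by (intro bdd_aboveI[of _ "card C"]) auto
qed

definition packing_number :: "'a::metric_space set \<Rightarrow> real \<Rightarrow> nat" where
  "packing_number X e = Sup {card S |S. S \<subseteq> X \<and> finite S \<and> separated e S}"

lemma card_le_packing_number:
  assumes "compact X" "e > 0" "S \<subseteq> X" "finite S" "separated e S"
  shows "card S \<le> packing_number X e"
  unfolding packing_number_def using assms(3-5)
  by (intro cSup_upper bdd_above_card_separated[OF assms(1,2)]) auto

lemma separated_image_of_far_steps:
  fixes xs :: "nat \<Rightarrow> 'a::metric_space"
  assumes e: "e > 0" and far: "\<And>t i. t \<in> T \<Longrightarrow> i \<in> {1..t} \<Longrightarrow> e \<le> dist (xs (Suc t)) (xs i)"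
  shows "inj_on (\<lambda>t. xs (Suc t)) T" "separated e ((\<lambda>t. xs (Suc t)) ` T)"
proof -
  have sep: "e \<le> dist (xs (Suc s)) (xs (Suc t))" if "s \<in> T" "t \<in> T" "s \<noteq> t" for s t
    using far[of s "Suc t"] far[of t "Suc s"] that by (cases "s < t") (auto simp: dist_commute)
  show "inj_on (\<lambda>t. xs (Suc t)) T"
    using sep e by (intro inj_onI) force
  show "separated e ((\<lambda>t. xs (Suc t)) ` T)"
    unfolding separated_def using sep by blast
qed

lemma isCont_pos_on_ball:
  fixes g :: "'a::real_normed_vector \<Rightarrow> real"
  assumes "isCont g 0" "g 0 > 0"
  shows "\<exists>d>0. \<forall>y. norm y < d \<longrightarrow> g y > 0"
proof -
  obtain d where d: "d > 0" "\<And>y. dist y 0 < d \<Longrightarrow> dist (g y) (g 0) < g 0"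
    using assms(1)[unfolded continuous_at_eps_delta, rule_format, OF assms(2)] by blast
  have "g y > 0" if "norm y < d" for y
    using d(2)[of y] that by (simp add: dist_real_def abs_less_iff)
  then show ?thesis using d(1) by blast
qed

lemma kernel_vanishes_far:
  fixes Psi :: "'a::real_normed_vector \<Rightarrow> real"
  assumes supp: "closure {z. Psi z \<noteq> 0} \<subseteq> ball 0 R" and l: "l > 0" and far: "R * l \<le> dist x y"
  shows "Psi ((1 / l) *\<^sub>R (x - y)) = 0"
proof (rule ccontr)
  assume "Psi ((1 / l) *\<^sub>R (x - y)) \<noteq> 0"
  then have "(1 / l) *\<^sub>R (x - y) \<in> ball 0 R"
    using supp closure_subset by (metis (mono_tags, lifting) mem_Collect_eq subsetD)
  moreover have "norm ((1 / l) *\<^sub>R (x - y)) = dist x y / l"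
    using l by (simp add: dist_norm)
  ultimately show False
    using l far by (simp add: pos_divide_less_eq)
qed

lemma kernel_pos_near:
  fixes Psi :: "'a::real_normed_vector \<Rightarrow> real"
  assumes pos: "\<And>y. norm y < d \<Longrightarrow> Psi y > 0" and l: "l > 0" and near: "dist x y < d * l"
  shows "Psi ((1 / l) *\<^sub>R (x - y)) > 0"
proof (rule pos)
  have "norm ((1 / l) *\<^sub>R (x - y)) = dist x y / l"
    using l by (simp add: dist_norm)
  then show "norm ((1 / l) *\<^sub>R (x - y)) < d"
    using l near by (simp add: pos_divide_less_eq)
qed

lemma Wsum_eq_0_iff:
  assumes "\<And>z. Psi z \<ge> 0"
  shows "Wsum Psi l xs t x = 0 \<longleftrightarrow> (\<forall>i\<in>{1..t}. Psi ((1 / l) *\<^sub>R (x - xs i)) = 0)"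
  unfolding Wsum_def using assms by (simp add: sum_nonneg_eq_0_iff)

lemma ucb_eq_infinity_iff:
  assumes "b > 0"
  shows "ucb Psi l b xs ys t x = \<infinity> \<longleftrightarrow> Wsum Psi l xs t x = 0"
proof (cases "Wsum Psi l xs t x = 0")
  case True
  then show ?thesis using assms by (simp add: ucb_def sigma_hat_def)
next
  case False
  then show ?thesis by (simp add: ucb_def sigma_hat_def del: ereal_infty_mult)
qed

lemma bdd_above_min_dist:
  fixes xs :: "nat \<Rightarrow> 'a::metric_space"
  assumes "bounded X" "t \<ge> 1"
  shows "bdd_above ((\<lambda>x. Min ((\<lambda>i. dist x (xs i)) ` {1..t})) ` X)"
proof -
  obtain a B where B: "\<And>x. x \<in> X \<Longrightarrow> dist a x \<le> B"
    using assms(1) unfolding bounded_def by blast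
  have "Min ((\<lambda>i. dist x (xs i)) ` {1..t}) \<le> B + dist a (xs 1)" if "x \<in> X" for x
  proof -
    have "Min ((\<lambda>i. dist x (xs i)) ` {1..t}) \<le> dist x (xs 1)"
      using assms(2) by (intro Min_le) auto
    also have "\<dots> \<le> dist a x + dist a (xs 1)" by (rule dist_triangle3)
    finally show ?thesis using B[OF that] by linarith
  qed
  then show ?thesis by (intro bdd_aboveI2)
qed

lemma fill_distance_nonneg:
  assumes "bounded X" "x \<in> X" "t \<ge> 1"
  shows "0 \<le> fill_distance X xs t"
proof -
  have "0 \<le> Min ((\<lambda>i. dist x (xs i)) ` {1..t})"
    using assms(3) by (subst Min_ge_iff) auto
  also have "\<dots> \<le> fill_distance X xs t"
    unfolding fill_distance_def using assms(2) bdd_above_min_dist[OF assms(1,3)] by (rule cSUP_upper)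
  finally show ?thesis .
qed

lemma far_point_of_fill_distance_gt:
  assumes "bounded X" "X \<noteq> {}" "t \<ge> 1" "r < fill_distance X xs t"
  obtains x where "x \<in> X" "\<And>i. i \<in> {1..t} \<Longrightarrow> r < dist x (xs i)"
proof -
  obtain x where "x \<in> X" "r < Min ((\<lambda>i. dist x (xs i)) ` {1..t})"
    using assms bdd_above_min_dist[OF assms(1,3)] unfolding fill_distance_def
    by (auto simp: less_cSUP_iff)
  then show ?thesis using that assms(3) by (simp add: Min_gr_iff)
qed

lemma INF_fill_distance_nonneg:
  assumes "bounded X" "\<And>i. i \<ge> 1 \<Longrightarrow> xs i \<in> X"
  shows "0 \<le> (INF t\<in>{1..}. fill_distance X xs t)"
  using assms by (intro cINF_greatest fill_distance_nonneg) auto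

lemma INF_fill_distance_le:
  assumes "bounded X" "\<And>i. i \<ge> 1 \<Longrightarrow> xs i \<in> X" "t \<ge> 1"
  shows "(INF t\<in>{1..}. fill_distance X xs t) \<le> fill_distance X xs t"
proof (rule cINF_lower)
  show "bdd_below ((\<lambda>t. fill_distance X xs t) ` {1..})"
    using assms(1,2) fill_distance_nonneg by (intro bdd_belowI2[of _ 0]) blast
qed (use assms(3) in simp)

lemma ucb_argmax_far_from_design:
  fixes X :: "'a::euclidean_space set"
  assumes X: "bounded X" "X \<noteq> {}"
    and Psi_nonneg: "\<And>z. Psi z \<ge> 0" and supp: "closure {z. Psi z \<noteq> 0} \<subseteq> ball 0 R"
    and pos: "\<And>y. norm y < d \<Longrightarrow> Psi y > 0"
    and l: "l > 0" and b: "b > 0" and t: "t \<ge> 1"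
    and argmax: "is_argmax_on X (ucb Psi l b xs ys t) u"
    and fill: "R * l < fill_distance X xs t"
    and i: "i \<in> {1..t}"
  shows "d * l \<le> dist u (xs i)"
proof -
  obtain x0 where x0: "x0 \<in> X" "\<And>i. i \<in> {1..t} \<Longrightarrow> R * l < dist x0 (xs i)"
    using far_point_of_fill_distance_gt[OF X t fill] by blast
  have "Wsum Psi l xs t x0 = 0"
    using x0(2) kernel_vanishes_far[OF supp l] by (simp add: Wsum_eq_0_iff[OF Psi_nonneg] less_imp_le)
  then have "ucb Psi l b xs ys t x0 = \<infinity>"
    using ucb_eq_infinity_iff[OF b] by blast
  then have "ucb Psi l b xs ys t u = \<infinity>"
    using argmax x0(1) unfolding is_argmax_on_def by (metis ereal_infty_less_eq(1))
  then have "Psi ((1 / l) *\<^sub>R (u - xs i)) = 0"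
    using i by (simp add: ucb_eq_infinity_iff[OF b] Wsum_eq_0_iff[OF Psi_nonneg])
  then have "\<not> dist u (xs i) < d * l"
    using kernel_pos_near[where Psi=Psi and d=d and l=l and x=u and y="xs i"] pos l by force
  then show ?thesis by simp
qed

lemma exists_fill_distance_le_of_ucb_steps:
  fixes X :: "'a::euclidean_space set" and xs :: "nat \<Rightarrow> 'a"
  assumes X: "bounded X" and xs: "\<And>i. i \<ge> 1 \<Longrightarrow> xs i \<in> X"
    and Psi_nonneg: "\<And>z. Psi z \<ge> 0" and supp: "closure {z. Psi z \<noteq> 0} \<subseteq> ball 0 R"
    and pos: "\<And>y. norm y < d \<Longrightarrow> Psi y > 0" and d: "d > 0" and l: "l > 0"
    and T: "finite T" "T \<subseteq> {1..}"
    and b: "\<And>t. b t > 0"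
    and steps: "\<And>t. t \<in> T \<Longrightarrow> is_argmax_on X (ucb Psi l (b t) xs ys t) (xs (Suc t))"
    and packing: "\<And>S. S \<subseteq> X \<Longrightarrow> finite S \<Longrightarrow> separated (d * l) S \<Longrightarrow> card S < card T"
  shows "\<exists>t\<in>T. fill_distance X xs t \<le> R * l"
proof (rule ccontr)
  assume "\<not> (\<exists>t\<in>T. fill_distance X xs t \<le> R * l)"
  then have fill: "R * l < fill_distance X xs t" if "t \<in> T" for t
    using that by (simp add: not_le)
  have "X \<noteq> {}" using xs[of 1] by auto
  have far: "d * l \<le> dist (xs (Suc t)) (xs i)" if "t \<in> T" "i \<in> {1..t}" for t i
  proof (rule ucb_argmax_far_from_design[OF X \<open>X \<noteq> {}\<close> Psi_nonneg supp pos l b])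
    show "t \<ge> 1" using T(2) that(1) by auto
  qed (use that steps fill in auto)
  let ?S = "(\<lambda>t. xs (Suc t)) ` T"
  have "card ?S = card T"
    using separated_image_of_far_steps(1)[of "d * l" T xs] far d l by (simp add: card_image)
  moreover have "card ?S < card T"
    using separated_image_of_far_steps(2)[of "d * l" T xs] far d l xs T(1)
    by (intro packing) auto
  ultimately show False by simp
qed

definition block_start :: "nat \<Rightarrow> (nat \<Rightarrow> nat) \<Rightarrow> nat \<Rightarrow> nat" where
  "block_start T0 len k = T0 + (\<Sum>j<k. len j)"

definition block_index :: "nat \<Rightarrow> (nat \<Rightarrow> nat) \<Rightarrow> nat \<Rightarrow> nat" where
  "block_index T0 len t = card {k. block_start T0 len (Suc k) \<le> t}"

lemma block_start_Suc: "block_start T0 len (Suc k) = block_start T0 len k + len k"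
  by (simp add: block_start_def)

lemma block_start_ge: "T0 \<le> block_start T0 len k"
  by (simp add: block_start_def)

lemma block_start_mono: "j \<le> k \<Longrightarrow> block_start T0 len j \<le> block_start T0 len k"
  unfolding block_start_def by (intro add_left_mono sum_mono2) auto

lemma block_start_ge_index:
  assumes "\<And>k. len k > 0"
  shows "k \<le> block_start T0 len k"
proof -
  have "(\<Sum>j<k. 1) \<le> (\<Sum>j<k. len j)"
    using assms by (intro sum_mono) (simp add: Suc_le_eq)
  then show ?thesis by (simp add: block_start_def)
qed

lemma block_index_eq:
  assumes "t \<in> {block_start T0 len k..<block_start T0 len (Suc k)}"
  shows "block_index T0 len t = k"
proof -
  have "{j. block_start T0 len (Suc j) \<le> t} = {..<k}"
  proof (intro set_eqI iffI)
    fix j assume "j \<in> {j. block_start T0 len (Suc j) \<le> t}"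
    then have "\<not> block_start T0 len (Suc k) \<le> block_start T0 len (Suc j)"
      using assms by auto
    then show "j \<in> {..<k}" using block_start_mono[of "Suc k" "Suc j" T0 len] by fastforce
  next
    fix j assume "j \<in> {..<k}"
    then show "j \<in> {j. block_start T0 len (Suc j) \<le> t}"
      using assms block_start_mono[of "Suc j" k T0 len] by auto
  qed
  then show ?thesis by (simp add: block_index_def)
qed

lemma filterlim_block_index:
  assumes "\<And>k. len k > 0"
  shows "filterlim (block_index T0 len) at_top sequentially"
  unfolding filterlim_at_top
proof (intro allI eventually_sequentiallyI)
  fix K t assume t: "block_start T0 len K \<le> t"
  have "{..<K} \<subseteq> {k. block_start T0 len (Suc k) \<le> t}"
  proof
    fix k assume "k \<in> {..<K}"
    then have "block_start T0 len (Suc k) \<le> block_start T0 len K"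
      by (intro block_start_mono) simp
    then show "k \<in> {k. block_start T0 len (Suc k) \<le> t}" using t by simp
  qed
  moreover have "{k. block_start T0 len (Suc k) \<le> t} \<subseteq> {..<t}"
  proof
    fix k assume "k \<in> {k. block_start T0 len (Suc k) \<le> t}"
    then show "k \<in> {..<t}" using block_start_ge_index[where len=len and k="Suc k", OF assms, of T0] by simp
  qed
  ultimately show "K \<le> block_index T0 len t"
    unfolding block_index_def by (metis card_lessThan card_mono finite_lessThan finite_subset)
qed

lemma exists_exponents_tendsto_0:
  fixes a :: "nat \<Rightarrow> real" and x :: real
  assumes x: "0 \<le> x" "x < 1"
  obtains m where "\<And>k. m k > 0" "(\<lambda>k. a k * x ^ m k) \<longlonglongrightarrow> 0"
proof -
  have "\<exists>j. x ^ j < inverse (real (Suc k)) / (\<bar>a k\<bar> + 1)" for k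
    using real_arch_pow_inv[of "inverse (real (Suc k)) / (\<bar>a k\<bar> + 1)" x] x by auto
  then obtain j where j: "\<And>k. x ^ j k < inverse (real (Suc k)) / (\<bar>a k\<bar> + 1)"
    by metis
  have "norm (a k * x ^ Suc (j k)) \<le> inverse (real (Suc k))" for k
  proof -
    have "norm (a k * x ^ Suc (j k)) \<le> (\<bar>a k\<bar> + 1) * x ^ j k"
      using x by (auto simp: abs_mult intro!: mult_mono mult_left_le_one_le)
    also have "\<dots> \<le> inverse (real (Suc k))"
      using j[of k] by (simp add: pos_less_divide_eq mult.commute less_imp_le)
    finally show ?thesis .
  qed
  then have "(\<lambda>k. a k * x ^ Suc (j k)) \<longlonglongrightarrow> 0"
    by (intro Lim_null_comparison[OF _ LIMSEQ_inverse_real_of_nat]) auto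
  then show ?thesis using that[of "\<lambda>k. Suc (j k)"] by simp
qed

lemma frequently_le_limit:
  fixes a :: "nat \<Rightarrow> real"
  assumes "\<exists>\<^sub>\<infinity>k. c \<le> a k" "a \<longlonglongrightarrow> L"
  shows "c \<le> L"
proof (rule ccontr)
  assume "\<not> c \<le> L"
  then have "\<forall>\<^sub>\<infinity>k. a k < c"
    using order_tendstoD(2)[OF assms(2)] by (simp add: cofinite_eq_sequentially)
  with assms(1) have "\<exists>\<^sub>\<infinity>k. a k < c \<and> c \<le> a k"
    by (rule frequently_eventually_conj)
  then show False by (simp add: not_less[symmetric])
qed

lemma (in prob_space) AE_frequently_of_prob_tendsto_0:
  assumes B: "\<And>k. B k \<in> events" and lim: "(\<lambda>k. prob (B k)) \<longlonglongrightarrow> 0"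
    and P: "\<And>k w. w \<in> space M \<Longrightarrow> w \<notin> B k \<Longrightarrow> P k w"
  shows "AE w in M. \<exists>\<^sub>\<infinity>k. P k w"
proof -
  have "AE w in M. \<exists>k\<ge>K. P k w" for K
  proof (rule AE_I')
    let ?N = "\<Inter>k\<in>{K..}. B k"
    have N: "?N \<in> events"
      using B by (intro sets.countable_INT) auto
    have "prob ?N \<le> 0"
    proof (rule LIMSEQ_le_const[OF lim])
      show "\<exists>N. \<forall>k\<ge>N. prob ?N \<le> prob (B k)"
        using B by (intro exI[of _ K] allI impI finite_measure_mono) auto
    qed
    then have "prob ?N = 0" using measure_nonneg[of M ?N] by linarith
    then show "?N \<in> null_sets M"
      using N by (simp add: emeasure_eq_measure null_sets_def)
    show "{w \<in> space M. \<not> (\<exists>k\<ge>K. P k w)} \<subseteq> ?N"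
      using P by auto
  qed
  then show ?thesis by (simp add: INFM_nat_le AE_all_countable)
qed

lemma boke_plus_run_prob_no_success:
  assumes run: "boke_plus_run M X f Psi vs p beta l T0 q eps x"
    and J: "finite J" "J \<subseteq> {T0..}"
  shows "{w\<in>space M. \<forall>t\<in>J. \<not> q t w} \<in> sets M"
    and "measure M {w\<in>space M. \<forall>t\<in>J. \<not> q t w} = (1 - p) ^ card J"
proof -
  interpret prob_space M using run by (simp add: boke_plus_run_def)
  define Y :: "nat + nat \<Rightarrow> _ \<Rightarrow> real"
    where "Y = (\<lambda>j. case j of Inl t \<Rightarrow> (\<lambda>w. of_bool (q t w)) | Inr i \<Rightarrow> eps i)"
  have "indep_vars (\<lambda>_. borel) Y (Inl ` {T0..} \<union> Inr ` {1..})"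
    using run by (simp add: boke_plus_run_def Y_def)
  then have Y_rv: "\<And>t. t \<ge> T0 \<Longrightarrow> random_variable borel (Y (Inl t))"
    and Y_indep: "indep_sets (\<lambda>j. {Y j -` A \<inter> space M |A. A \<in> sets borel}) (Inl ` {T0..} \<union> Inr ` {1..})"
    unfolding indep_vars_def2 by auto
  define E where "E t = Y (Inl t) -` {0} \<inter> space M" for t
  have E_eq: "E t = {w\<in>space M. \<not> q t w}" for t
    by (auto simp: E_def Y_def)
  have E_ev: "E t \<in> events" if "t \<ge> T0" for t
    unfolding E_def using Y_rv[OF that] by (intro measurable_sets) auto
  have E_prob: "prob (E t) = 1 - p" if "t \<ge> T0" for t
  proof -
    have "{w\<in>space M. q t w} = space M - E t" by (auto simp: E_eq)
    then have "prob (E t) = 1 - prob {w\<in>space M. q t w}"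
      using prob_compl[OF E_ev[OF that]] by simp
    then show ?thesis using run that by (simp add: boke_plus_run_def)
  qed
  have "{w\<in>space M. \<forall>t\<in>J. \<not> q t w} \<in> sets M \<and>
    measure M {w\<in>space M. \<forall>t\<in>J. \<not> q t w} = (1 - p) ^ card J"
  proof (cases "J = {}")
    case False
    have eq: "{w\<in>space M. \<forall>t\<in>J. \<not> q t w} = (\<Inter>t\<in>J. E t)"
      using False by (auto simp: E_eq)
    have meas: "(\<Inter>t\<in>J. E t) \<in> events"
      using J False E_ev by (intro sets.finite_INT) auto
    have "prob (\<Inter>t\<in>J. E t) = prob (\<Inter>j\<in>Inl ` J. Y j -` {0} \<inter> space M)"
      by (simp add: E_def)
    also have "\<dots> = (\<Prod>j\<in>Inl ` J. prob (Y j -` {0} \<inter> space M))"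
      using J False by (intro indep_setsD[OF Y_indep]) auto
    also have "\<dots> = (\<Prod>t\<in>J. prob (E t))"
      by (simp add: prod.reindex E_def)
    also have "\<dots> = (1 - p) ^ card J"
      using J E_prob by (simp add: subset_eq)
    finally show ?thesis
      unfolding eq using meas by simp
  qed (simp add: prob_space)
  then show "{w\<in>space M. \<forall>t\<in>J. \<not> q t w} \<in> sets M"
    "measure M {w\<in>space M. \<forall>t\<in>J. \<not> q t w} = (1 - p) ^ card J"
    by simp_all
qed

lemma boke_plus_run_AE_frequently_block_successes:
  assumes run: "boke_plus_run M X f Psi vs p beta l T0 q eps x"
    and lim: "(\<lambda>k. real (n k) * (1 - p) ^ m k) \<longlonglongrightarrow> 0"
  defines "s \<equiv> block_start T0 (\<lambda>k. n k * m k)"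
  shows "AE w in M. \<exists>\<^sub>\<infinity>k. n k \<le> card {t \<in> {s k..<s (Suc k)}. q t w}"
proof -
  interpret prob_space M using run by (simp add: boke_plus_run_def)
  \<comment> \<open>Block k consists of n k windows of length m k; it fails only if some window has no UCB step.\<close>
  define W where "W k r = {s k + r * m k..<s k + Suc r * m k}" for k r
  define B where "B k = (\<Union>r<n k. {w\<in>space M. \<forall>t\<in>W k r. \<not> q t w})" for k
  have W_block: "W k r \<subseteq> {s k..<s (Suc k)}" if "r < n k" for k r
  proof -
    have "Suc r * m k \<le> n k * m k" using that by (intro mult_right_mono) auto
    then show ?thesis by (auto simp: W_def s_def block_start_Suc)
  qed
  have W_late: "W k r \<subseteq> {T0..}" for k r
    using block_start_ge[of T0 "\<lambda>k. n k * m k" k] by (auto simp: W_def s_def)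
  note no_success = boke_plus_run_prob_no_success[OF run finite_atLeastLessThan W_late[unfolded W_def]]
  have B_ev: "B k \<in> events" for k
    unfolding B_def W_def using no_success(1) by (intro sets.finite_UN) auto
  have "prob (B k) \<le> real (n k) * (1 - p) ^ m k" for k
  proof -
    have "prob (B k) \<le> (\<Sum>r<n k. prob {w\<in>space M. \<forall>t\<in>W k r. \<not> q t w})"
      unfolding B_def W_def using no_success(1) by (intro measure_UNION_le) auto
    also have "\<dots> = real (n k) * (1 - p) ^ m k"
      unfolding W_def using no_success(2) by simp
    finally show ?thesis .
  qed
  then have B_lim: "(\<lambda>k. prob (B k)) \<longlonglongrightarrow> 0"
    by (intro Lim_null_comparison[OF _ lim]) auto
  have count: "n k \<le> card {t \<in> {s k..<s (Suc k)}. q t w}" if w: "w \<in> space M" "w \<notin> B k" for k w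
  proof -
    have "{..<n k} \<subseteq> (\<lambda>t. (t - s k) div m k) ` {t \<in> {s k..<s (Suc k)}. q t w}"
    proof
      fix r assume r: "r \<in> {..<n k}"
      then obtain t where t: "t \<in> W k r" "q t w" using w by (auto simp: B_def)
      have "(t - s k) div m k = r"
        using t(1) by (intro div_nat_eqI) (auto simp: W_def algebra_simps)
      then show "r \<in> (\<lambda>t. (t - s k) div m k) ` {t \<in> {s k..<s (Suc k)}. q t w}"
        using t W_block[of r k] r by force
    qed
    from surj_card_le[OF _ this] show ?thesis by simp
  qed
  show ?thesis by (rule AE_frequently_of_prob_tendsto_0[OF B_ev B_lim count])
qed

lemma boke_plus_run_design_in:
  assumes "boke_plus_run M X f Psi vs p beta l T0 q eps x" "w \<in> space M" "i \<ge> 1"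
  shows "x i w \<in> X"
  using assms by (simp add: boke_plus_run_def)

lemma boke_plus_run_ucb_step:
  assumes "boke_plus_run M X f Psi vs p beta l T0 q eps x" "w \<in> space M" "T0 \<le> t" "q t w"
  shows "is_argmax_on X (ucb Psi (l t) (beta t) (\<lambda>i. x i w) (\<lambda>i. f (x i w) + eps i w) t) (x (Suc t) w)"
  using assms by (simp add: boke_plus_run_def Let_def)

lemma boke_plus_run_AE_frequently_fill_distance_le:
  fixes X :: "'a::euclidean_space set"
  assumes run: "boke_plus_run M X f Psi vs p beta l T0 q eps x"
    and X: "bounded X"
    and Psi_nonneg: "\<And>z. Psi z \<ge> 0" and supp: "closure {z. Psi z \<noteq> 0} \<subseteq> ball 0 R"
    and pos: "\<And>y. norm y < d \<Longrightarrow> Psi y > 0" and d: "d > 0"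
    and T0: "T0 \<ge> 1" and beta: "\<And>t. beta t > 0"
    and lim: "(\<lambda>k. real (n k) * (1 - p) ^ m k) \<longlonglongrightarrow> 0"
    and bandwidth: "\<And>k t. t \<in> {block_start T0 (\<lambda>k. n k * m k) k..<block_start T0 (\<lambda>k. n k * m k) (Suc k)}
      \<Longrightarrow> l t = h k"
    and h_pos: "\<And>k. h k > 0"
    and packing: "\<And>k S. S \<subseteq> X \<Longrightarrow> finite S \<Longrightarrow> separated (d * h k) S \<Longrightarrow> card S < n k"
  shows "AE w in M. \<exists>\<^sub>\<infinity>k. (INF t\<in>{1..}. fill_distance X (\<lambda>i. x i w) t) \<le> R * h k"
  using boke_plus_run_AE_frequently_block_successes[OF run lim] AE_space
proof eventually_elim
  case (elim w)
  let ?s = "block_start T0 (\<lambda>k. n k * m k)"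
  have xs: "\<And>i. i \<ge> 1 \<Longrightarrow> x i w \<in> X"
    using boke_plus_run_design_in[OF run elim(2)] .
  from elim(1) show ?case
  proof (rule frequently_elim1)
    fix k
    let ?T = "{t \<in> {?s k..<?s (Suc k)}. q t w}"
    assume many: "n k \<le> card ?T"
    have T_late: "T0 \<le> t" if "t \<in> ?T" for t
      using that block_start_ge[of T0 "\<lambda>k. n k * m k" k] by simp
    have "\<exists>t\<in>?T. fill_distance X (\<lambda>i. x i w) t \<le> R * h k"
    proof (rule exists_fill_distance_le_of_ucb_steps[where b=beta and ys="\<lambda>i. f (x i w) + eps i w",
          OF X xs Psi_nonneg supp pos d h_pos])
      show "?T \<subseteq> {1..}" using T_late T0 by force
      show "is_argmax_on X (ucb Psi (h k) (beta t) (\<lambda>i. x i w) (\<lambda>i. f (x i w) + eps i w) t) (x (Suc t) w)"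
        if "t \<in> ?T" for t
        using boke_plus_run_ucb_step[OF run elim(2) T_late[OF that]] bandwidth[of t k] that by simp
      show "card S < card ?T" if "S \<subseteq> X" "finite S" "separated (d * h k) S" for S
        using packing[OF that] many by simp
    qed (simp_all add: beta)
    then obtain t where t: "t \<in> ?T" "fill_distance X (\<lambda>i. x i w) t \<le> R * h k" ..
    have "(INF t\<in>{1..}. fill_distance X (\<lambda>i. x i w) t) \<le> fill_distance X (\<lambda>i. x i w) t"
      using INF_fill_distance_le[OF X xs] T_late[OF t(1)] T0 by simp
    with t(2) show "(INF t\<in>{1..}. fill_distance X (\<lambda>i. x i w) t) \<le> R * h k" by simp
  qed
qed

lemma boke_plus_run_fixed_bandwidth:
  fixes X :: "'a::euclidean_space set"
  assumes run: "boke_plus_run M X f Psi vs p beta (\<lambda>_. l) T0 q eps x"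
    and X: "compact X"
    and Psi_nonneg: "\<And>z. Psi z \<ge> 0" and supp: "closure {z. Psi z \<noteq> 0} \<subseteq> ball 0 R"
    and pos: "\<And>y. norm y < d \<Longrightarrow> Psi y > 0" and d: "d > 0"
    and p: "0 < p" "p \<le> 1" and T0: "T0 \<ge> 1" and beta: "\<And>t. beta t > 0"
    and l: "l > 0"
  shows "AE w in M. (INF t\<in>{1..}. fill_distance X (\<lambda>i. x i w) t) \<le> R * l"
proof -
  define n where "n = Suc (packing_number X (d * l))"
  obtain m where lim: "(\<lambda>k. real n * (1 - p) ^ m k) \<longlonglongrightarrow> 0"
    using exists_exponents_tendsto_0[of "1 - p" "\<lambda>_. real n"] p by auto
  have "AE w in M. \<exists>\<^sub>\<infinity>k::nat. (INF t\<in>{1..}. fill_distance X (\<lambda>i. x i w) t) \<le> R * l"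
  proof (rule boke_plus_run_AE_frequently_fill_distance_le[where h="\<lambda>_. l" and n="\<lambda>_. n",
        OF run compact_imp_bounded[OF X] Psi_nonneg supp _ d T0 beta lim])
    show "card S < n" if "S \<subseteq> X" "finite S" "separated (d * l) S" for S
      using card_le_packing_number[OF X _ that] d l by (simp add: n_def)
  qed (simp_all add: pos l)
  then show ?thesis by simp
qed

lemma boke_plus_run_vanishing_bandwidth:
  fixes X :: "'a::euclidean_space set"
  assumes X: "compact X"
    and Psi_nonneg: "\<And>z. Psi z \<ge> 0" and supp: "closure {z. Psi z \<noteq> 0} \<subseteq> ball 0 R"
    and pos: "\<And>y. norm y < d \<Longrightarrow> Psi y > 0" and d: "d > 0"
    and p: "0 < p" "p \<le> 1" and T0: "T0 \<ge> 1" and beta: "\<And>t. beta t > 0"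
  shows "\<exists>l::nat \<Rightarrow> real. (\<forall>t. l t > 0) \<and> l \<longlonglongrightarrow> 0 \<and>
    (\<forall>(M::'w measure) q eps x. boke_plus_run M X f Psi vs p beta l T0 q eps x \<longrightarrow>
      (AE w in M. (INF t\<in>{1..}. fill_distance X (\<lambda>i. x i w) t) = 0))"
proof -
  define h :: "nat \<Rightarrow> real" where "h k = inverse (real (Suc k))" for k
  define n where "n k = Suc (packing_number X (d * h k))" for k
  obtain m where m_pos: "\<And>k. m k > 0" and lim: "(\<lambda>k. real (n k) * (1 - p) ^ m k) \<longlonglongrightarrow> 0"
    using exists_exponents_tendsto_0[of "1 - p" "\<lambda>k. real (n k)"] p by auto
  define l where "l t = h (block_index T0 (\<lambda>k. n k * m k) t)" for t
  show ?thesis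
  proof (intro exI[of _ l] conjI allI impI)
    show "l t > 0" for t by (simp add: l_def h_def)
    show "l \<longlonglongrightarrow> 0"
      unfolding l_def h_def using m_pos
      by (intro filterlim_compose[OF LIMSEQ_inverse_real_of_nat filterlim_block_index]) (simp add: n_def)
    fix M :: "'w measure" and q eps x
    assume run: "boke_plus_run M X f Psi vs p beta l T0 q eps x"
    have "AE w in M. \<exists>\<^sub>\<infinity>k. (INF t\<in>{1..}. fill_distance X (\<lambda>i. x i w) t) \<le> R * h k"
    proof (rule boke_plus_run_AE_frequently_fill_distance_le[
          OF run compact_imp_bounded[OF X] Psi_nonneg supp _ d T0 beta lim])
      show "card S < n k" if "S \<subseteq> X" "finite S" "separated (d * h k) S" for k S
        using card_le_packing_number[OF X _ that] d by (simp add: n_def h_def)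
    qed (simp_all add: pos l_def h_def block_index_eq)
    with AE_space show "AE w in M. (INF t\<in>{1..}. fill_distance X (\<lambda>i. x i w) t) = 0"
    proof eventually_elim
      case (elim w)
      have "(\<lambda>k. R * h k) \<longlonglongrightarrow> 0"
        unfolding h_def by (rule tendsto_mult_right_zero[OF LIMSEQ_inverse_real_of_nat])
      with elim(2) have "(INF t\<in>{1..}. fill_distance X (\<lambda>i. x i w) t) \<le> 0"
        by (rule frequently_le_limit)
      moreover have "0 \<le> (INF t\<in>{1..}. fill_distance X (\<lambda>i. x i w) t)"
        by (rule INF_fill_distance_nonneg[OF compact_imp_bounded[OF X] boke_plus_run_design_in[OF run elim(1)]])
      ultimately show ?case by simp
    qed
  qed
qed

theorem mainTheorem5:
  fixes X :: "'a::euclidean_space set"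
    and f :: "'a \<Rightarrow> real"
    and Psi :: "'a \<Rightarrow> real"
    and R_Psi M_Psi vs p :: real
    and beta :: "nat \<Rightarrow> real"
    and T0 :: nat
  assumes A1: "compact X" "convex X" "interior X \<noteq> {}"
    and A2: "continuous_on X f"
    and A3: "\<And>z. Psi z \<ge> 0" "closure {z. Psi z \<noteq> 0} \<subseteq> ball 0 R_Psi"
            "isCont Psi 0" "Psi 0 > 0" "\<And>z. Psi z \<le> M_Psi"
    and A4: "vs \<ge> 0"
    and p: "0 < p" "p \<le> 1"
    and T0: "T0 \<ge> 1"
    and beta: "\<And>t. beta t > 0" "filterlim beta at_top sequentially"
  shows
    "(\<forall>l::real. l > 0 \<longrightarrow>
       (\<forall>(M::'w measure) q eps x.
          boke_plus_run M X f Psi vs p beta (\<lambda>_. l) T0 q eps x \<longrightarrow>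
          (AE w in M. (INF t\<in>{1..}. fill_distance X (\<lambda>i. x i w) t) \<le> R_Psi * l)))
     \<and>
     (\<exists>l::nat \<Rightarrow> real. (\<forall>t. l t > 0) \<and> l \<longlonglongrightarrow> 0 \<and>
       (\<forall>(M::'w measure) q eps x.
          boke_plus_run M X f Psi vs p beta l T0 q eps x \<longrightarrow>
          (AE w in M. (INF t\<in>{1..}. fill_distance X (\<lambda>i. x i w) t) = 0)))"
proof -
  obtain d where d: "d > 0" "\<And>y. norm y < d \<Longrightarrow> Psi y > 0"
    using isCont_pos_on_ball[OF A3(3,4)] by blast
  show ?thesis
  proof (intro conjI allI impI)
    fix l :: real and M :: "'w measure" and q eps x
    assume l: "l > 0" and run: "boke_plus_run M X f Psi vs p beta (\<lambda>_. l) T0 q eps x"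
    show "AE w in M. (INF t\<in>{1..}. fill_distance X (\<lambda>i. x i w) t) \<le> R_Psi * l"
      by (rule boke_plus_run_fixed_bandwidth[where d=d, OF run A1(1) A3(1,2) d(2,1) p T0 beta(1) l])
  next
    show "\<exists>l::nat \<Rightarrow> real. (\<forall>t. l t > 0) \<and> l \<longlonglongrightarrow> 0 \<and>
       (\<forall>(M::'w measure) q eps x.
          boke_plus_run M X f Psi vs p beta l T0 q eps x \<longrightarrow>
          (AE w in M. (INF t\<in>{1..}. fill_distance X (\<lambda>i. x i w) t) = 0))"
      by (rule boke_plus_run_vanishing_bandwidth[where d=d, OF A1(1) A3(1,2) d(2,1) p T0 beta(1)])
  qed
qed

end
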